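(* Let $\mathcal{C}^1, \mathcal{C}^2 \subset \mathbb{R}^l$, $p^1 \neq p^2$, and the growth distance algorithm be as described in the context, producing lower bounds $\beta^l_k > 0$ and upper bounds $\beta^u_k \in (0, \infty]$ on the ray intersection value. Then the relative gap $\beta^u_k/\beta^l_k - 1$ is monotonically decreasing (non-increasing) in $k$ over the iterations executed by the algorithm.
   Context: A proper convex (PC) set is a compact convex subset of $\mathbb{R}^l$ with nonempty interior. For compact convex $\mathcal{C}$: $B_r(x)$ is the closed Euclidean ball; inradius $r(\mathcal{C}, x) = \max\{r \ge 0 : B_r(x) \subset \mathcal{C}\}$; support function $s_v[\mathcal{C}](\lambda) = \max_{z \in \mathcal{C}} \langle \lambda, z\rangle$; support point function $s_p[\mathcal{C}](\lambda)$ is any (arbitrary) selection from $\arg\max_{z \in \mathcal{C}}\langle \lambda, z\rangle$. Setting: $\mathcal{C}^1$ is a PC set, $\mathcal{C}^2 \ne \emptyset$ compact convex, $p^1 \in \operatorname{int}\mathcal{C}^1$, $p^2 \in \mathcal{C}^2$, $p^1 \ne p^2$, $\underline r = r(\mathcal{C}^1,p^1) + r(\mathcal{C}^2,p^2)$. Let $p = p^2 - p^1$ and $\mathcal{C} = \mathcal{C}^1 - \mathcal{C}^2 + \{p\}$, so $B_{\underline r}(0) \subset \mathcal{C}$; $s_v[\mathcal{C}](\lambda) = s_v[\mathcal{C}^1](\lambda) + s_v[\mathcal{C}^2](-\lambda) + \langle\lambda, p\rangle$, $s_p[\mathcal{C}](\lambda) = s_p[\mathcal{C}^1](\lambda) -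 s_p[\mathcal{C}^2](-\lambda) + p$. The ray intersection problem is: maximize $\beta$ subject to $z \in \mathcal{C}$, $z = \beta p$. Algorithm. Initialization ($k=0$): $M^o_0 = \emptyset$, $\beta^u_0 = \infty$; $M^i_0 = \{-l+1,\dots,0\}$; choose $l-1$ linearly independent unit vectors $p^\perp_m$ orthogonal to $p$ and set $z_m = K p^\perp_m + \epsilon p/\|p\|$ ($m=-l+1,\dots,-1$), $z_0 = l\epsilon p/\|p\| - \sum_{m=-l+1}^{-1} z_m$, with $\epsilon, K > 0$ such that $\|z_m\| \le \underline r$; $M^{i*}_0 = M^i_0$, $\beta^l_0 = \epsilon/\|p\|$, $\lambda_0 = p/\|p\|_\infty$. Iteration $k \ge 1$: $z_k = s_p[\mathcal{C}](\lambda_{k-1})$, $v_k = s_v[\mathcal{C}](\lambda_{k-1})$. Outer update: $M^o_k = \{m^*\}$ with $m^* \in \arg\min_{m \in M^o_{k-1}\cup\{k\}} v_m/\langle\lambda_{m-1},p\rangle$, and $\beta^u_k = \min\{\beta^u_{k-1}, v_k/\langle\lambda_{k-1},p\rangle\}$. Inner update: $M^i_k = M^i_{k-1}\cup\{k\}$; solve the LP $\min \sum_{m\in M^i_k}\nu_m$ s.t. $\sum_{m\in M^i_k}\nu_m z_m = p$, $\nu \ge 0$ by the primal Simplex method started from basis $M^{i*}_{k-1}$ (most-negative reduced cost entering rule, minimum-ratio leaving rule, Bland's anti-cycling rule), obtaining optimal basis $M^{i*}_k$ and optimal value $(\beta^l_k)^{-1}$; optionally prune $M^i_k$ to any subset containing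 $M^{i*}_k$; set $\lambda_k = Z^{-\top}\mathbf{1}$ with $Z = [z_{m_1}\cdots z_{m_l}]$, $\{m_1,\dots,m_l\} = M^{i*}_k$, then $\lambda_k \leftarrow \lambda_k/\|\lambda_k\|_\infty$. Stop when $\beta^u_k/\beta^l_k - 1 < \epsilon_{tol}$ or $k = K_{max}$. *)

theory Defs
  imports "HOL-Analysis.Analysis"
begin

definition proper_convex :: "'a::euclidean_space set \<Rightarrow> bool" where
  "proper_convex C \<longleftrightarrow> compact C \<and> convex C \<and> interior C \<noteq> {}"

definition inradius :: "'a::euclidean_space set \<Rightarrow> 'a \<Rightarrow> real" where
  "inradius C x = Sup {r. 0 \<le> r \<and> cball x r \<subseteq> C}"

definition support_value :: "'a::euclidean_space set \<Rightarrow> 'a \<Rightarrow> real" where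
  "support_value C lam = Sup ((\<lambda>z. lam \<bullet> z) ` C)"

text \<open>The set of maximisers, from which a support point s_p[C](lambda) is selected.\<close>
definition support_points :: "'a::euclidean_space set \<Rightarrow> 'a \<Rightarrow> 'a set" where
  "support_points C lam = {z \<in> C. \<forall>y\<in>C. lam \<bullet> y \<le> lam \<bullet> z}"

text \<open>Feasibility for the LP  min sum nu_m  s.t. sum nu_m z_m = p, nu >= 0, over index set M.\<close>
definition lp_feasible :: "(int \<Rightarrow> 'a::euclidean_space) \<Rightarrow> int set \<Rightarrow> 'a \<Rightarrow> (int \<Rightarrow> real) \<Rightarrow> bool" where
  "lp_feasible z M p \<nu> \<longleftrightarrow> (\<forall>m\<in>M. 0 \<le> \<nu> m) \<and> (\<Sum>m\<in>M. \<nu> m *\<^sub>R z m) = p"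

definition lp_optimal_basis ::
  "(int \<Rightarrow> 'a::euclidean_space) \<Rightarrow> int set \<Rightarrow> 'a \<Rightarrow> int set \<Rightarrow> real \<Rightarrow> bool" where
  "lp_optimal_basis z M p B val \<longleftrightarrow>
     B \<subseteq> M \<and> card B = DIM('a) \<and> inj_on z B \<and> independent (z ` B) \<and>
     (\<exists>\<nu>. lp_feasible z B p \<nu> \<and> (\<Sum>m\<in>B. \<nu> m) = val) \<and>
     (\<forall>\<nu>. lp_feasible z M p \<nu> \<longrightarrow> val \<le> (\<Sum>m\<in>M. \<nu> m))"

end

theory Submission
  imports Defs
begin

text \<open>
  The upper bound \<open>\<beta>\<^sup>u\<^sub>k\<close> is a running minimum, hence non-increasing, and it is
  nonnegative because every candidate \<open>v\<^sub>k / \<langle>\<lambda>\<^sub>k\<^sub>-\<^sub>1, p\<rangle>\<close> is: \<open>v\<^sub>k \<ge> 0\<close> since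
  \<open>p\<^sup>1 \<in> \<C>\<^sup>1\<close>, \<open>p\<^sup>2 \<in> \<C>\<^sup>2\<close>, and \<open>\<langle>\<lambda>\<^sub>k, p\<rangle> > 0\<close> since \<open>\<lambda>\<^sub>k\<close> is a positive multiple of
  the dual solution of the LP, whose pairing with \<open>p\<close> is the positive optimal value.
  The lower bound \<open>\<beta>\<^sup>l\<^sub>k\<close> is non-decreasing: the optimal basis of step \<open>k - 1\<close>
  survives pruning, so the previous optimum is still feasible for the enlarged LP
  of step \<open>k\<close>, whose value \<open>(\<beta>\<^sup>l\<^sub>k)\<^sup>-\<^sup>1\<close> can therefore only decrease.
  A nonnegative non-increasing numerator over a positive non-decreasing
  denominator gives a non-increasing quotient.
\<close>

lemma ereal_divide_antimono:
  fixes x y :: ereal and c d :: real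
  assumes "0 \<le> x" "x \<le> y" "0 < d" "d \<le> c"
  shows "x / ereal c \<le> y / ereal d"
  using assms by (cases x; cases y) (auto simp: frac_le)

lemma relative_gap_antimono:
  fixes bu :: "nat \<Rightarrow> ereal" and bl :: "nat \<Rightarrow> real"
  assumes bu_nonneg: "\<And>k. k \<le> N \<Longrightarrow> 0 \<le> bu k"
    and bl_pos: "\<And>k. k \<le> N \<Longrightarrow> 0 < bl k"
    and bu_step: "\<And>k. k < N \<Longrightarrow> bu (Suc k) \<le> bu k"
    and bl_step: "\<And>k. k < N \<Longrightarrow> bl k \<le> bl (Suc k)"
    and "j \<le> k" "k \<le> N"
  shows "bu k / ereal (bl k) - 1 \<le> bu j / ereal (bl j) - 1"
proof -
  have step: "bu (Suc i) / ereal (bl (Suc i)) \<le> bu i / ereal (bl i)" if "i \<in> {..<N}" for i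
  proof (rule ereal_divide_antimono)
    show "0 \<le> bu (Suc i)" "0 < bl i"
      using that by (simp_all add: bu_nonneg bl_pos)
    show "bu (Suc i) \<le> bu i" "bl i \<le> bl (Suc i)"
      using that by (simp_all add: bu_step bl_step)
  qed
  have "{j..<k} \<subseteq> {..<N}"
    using assms(6) by auto
  then have "bu k / ereal (bl k) \<le> bu j / ereal (bl j)"
    using lift_Suc_antimono_le_ivl[where f = "\<lambda>i. bu i / ereal (bl i)", OF step assms(5)] by blast
  then show ?thesis by (rule ereal_minus_mono) simp
qed

lemma support_value_upper:
  assumes "bounded C" "x \<in> C"
  shows "lam \<bullet> x \<le> support_value C lam"
proof -
  have "bounded ((\<lambda>z. lam \<bullet> z) ` C)"
    using assms(1) by (intro bounded_linear_image) (auto intro: bounded_linear_intros)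
  then show ?thesis
    unfolding support_value_def using assms(2) by (auto intro: cSup_upper bounded_imp_bdd_above)
qed

lemma support_value_difference_nonneg:
  assumes "bounded C1" "bounded C2" "p1 \<in> C1" "p2 \<in> C2"
  shows "0 \<le> support_value C1 lam + support_value C2 (- lam) + lam \<bullet> (p2 - p1)"
  using support_value_upper[OF assms(1,3), of lam] support_value_upper[OF assms(2,4), of "- lam"]
  by (simp add: inner_diff_right)

lemma lp_feasible_extend_zero:
  assumes "lp_feasible z M p \<nu>" "M \<subseteq> M'" "finite M'"
  shows "lp_feasible z M' p (\<lambda>m. if m \<in> M then \<nu> m else 0)"
    and "(\<Sum>m\<in>M'. if m \<in> M then \<nu> m else 0) = (\<Sum>m\<in>M. \<nu> m)"
proof -
  have combination: "(\<Sum>m\<in>M'. (if m \<in> M then \<nu> m else 0) *\<^sub>R z m) = (\<Sum>m\<in>M. \<nu> m *\<^sub>R z m)"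
    using assms(2,3) by (intro sum.mono_neutral_cong_right) auto
  then show "lp_feasible z M' p (\<lambda>m. if m \<in> M then \<nu> m else 0)"
    using assms(1) unfolding lp_feasible_def by auto
  show "(\<Sum>m\<in>M'. if m \<in> M then \<nu> m else 0) = (\<Sum>m\<in>M. \<nu> m)"
    using assms(2,3) by (intro sum.mono_neutral_cong_right) auto
qed

lemma lp_optimal_basis_finite:
  assumes "lp_optimal_basis z M p B val"
  shows "finite B"
  using assms DIM_positive card.infinite unfolding lp_optimal_basis_def by fastforce

lemma lp_optimal_basis_value_le:
  assumes "lp_optimal_basis z M' p B val" "lp_feasible z M p \<nu>" "M \<subseteq> M'" "finite M'"
  shows "val \<le> (\<Sum>m\<in>M. \<nu> m)"
  using assms lp_feasible_extend_zero[OF assms(2-4)] unfolding lp_optimal_basis_def by metis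

lemma lp_optimal_basis_value_attained:
  assumes "lp_optimal_basis z M p B val" "B \<subseteq> M'" "finite M'"
  shows "\<exists>\<nu>. lp_feasible z M' p \<nu> \<and> (\<Sum>m\<in>M'. \<nu> m) = val"
  using assms lp_feasible_extend_zero[OF _ assms(2,3)] unfolding lp_optimal_basis_def by metis

lemma lp_optimal_basis_value_pos:
  assumes "lp_optimal_basis z M p B val" "p \<noteq> 0"
  shows "0 < val"
proof -
  obtain \<nu> where \<nu>: "lp_feasible z B p \<nu>" "(\<Sum>m\<in>B. \<nu> m) = val"
    using assms(1) unfolding lp_optimal_basis_def by blast
  have nonneg: "\<forall>m\<in>B. 0 \<le> \<nu> m"
    using \<nu>(1) unfolding lp_feasible_def by blast
  have "val \<noteq> 0"
  proof
    assume "val = 0"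
    then have "\<forall>m\<in>B. \<nu> m = 0"
      using sum_nonneg_eq_0_iff[OF lp_optimal_basis_finite[OF assms(1)]] nonneg \<nu>(2) by blast
    then show False
      using \<nu>(1) assms(2) unfolding lp_feasible_def by simp
  qed
  moreover have "0 \<le> val"
    using \<nu>(2) nonneg sum_nonneg by metis
  ultimately show ?thesis by simp
qed

lemma lp_optimal_basis_dual_pos:
  assumes "lp_optimal_basis z M p B val" "p \<noteq> 0" "\<forall>m\<in>B. \<mu> \<bullet> z m = 1"
  shows "0 < (\<mu> /\<^sub>R infnorm \<mu>) \<bullet> p"
proof -
  obtain \<nu> where \<nu>: "lp_feasible z B p \<nu>" "(\<Sum>m\<in>B. \<nu> m) = val"
    using assms(1) unfolding lp_optimal_basis_def by blast
  have "\<mu> \<bullet> p = (\<Sum>m\<in>B. \<nu> m * (\<mu> \<bullet> z m))"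
    using \<nu>(1) unfolding lp_feasible_def by (auto simp: inner_sum_right)
  also have "\<dots> = val"
    using assms(3) \<nu>(2) by simp
  finally have "0 < \<mu> \<bullet> p"
    using lp_optimal_basis_value_pos[OF assms(1,2)] by simp
  moreover from this have "0 < infnorm \<mu>"
    by (auto simp: infnorm_pos_lt)
  ultimately show ?thesis by simp
qed

lemma initial_lp_value_attained:
  fixes z :: "int \<Rightarrow> 'a::euclidean_space"
  assumes "0 < \<epsilon>" "p \<noteq> 0" "0 < n"
    and z0: "z 0 = (real n * \<epsilon> / norm p) *\<^sub>R p - (\<Sum>m\<in>{- int n + 1 .. -1}. z m)"
  shows "\<exists>\<nu>. lp_feasible z {- int n + 1 .. 0} p \<nu> \<and>
           (\<Sum>m\<in>{- int n + 1 .. 0}. \<nu> m) = inverse (\<epsilon> / norm p)"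
proof (intro exI conjI)
  have split: "{- int n + 1 .. 0} = insert 0 {- int n + 1 .. -1}"
    using assms(3) by auto
  have "(\<Sum>m\<in>{- int n + 1 .. 0}. z m) = (real n * \<epsilon> / norm p) *\<^sub>R p"
    unfolding split using z0 by simp
  then show "lp_feasible z {- int n + 1 .. 0} p (\<lambda>_. norm p / (real n * \<epsilon>))"
    using assms(1-3) unfolding lp_feasible_def by (simp add: scaleR_sum_right[symmetric])
  show "(\<Sum>m\<in>{- int n + 1 .. 0}. norm p / (real n * \<epsilon>)) = inverse (\<epsilon> / norm p)"
    using assms(1,3) by simp
qed

lemma upper_bound_nonneg:
  fixes betau :: "nat \<Rightarrow> ereal"
  assumes "bounded C1" "bounded C2" "p1 \<in> C1" "p2 \<in> C2" "0 \<le> betau 0"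
    and lam_pos: "\<And>k. k < N \<Longrightarrow> 0 < lam k \<bullet> (p2 - p1)"
    and v: "\<forall>k. 1 \<le> k \<and> k \<le> N \<longrightarrow>
      v k = support_value C1 (lam (k - 1)) + support_value C2 (- lam (k - 1)) + lam (k - 1) \<bullet> (p2 - p1)"
    and betau: "\<forall>k. 1 \<le> k \<and> k \<le> N \<longrightarrow>
      betau k = min (betau (k - 1)) (ereal (v k / (lam (k - 1) \<bullet> (p2 - p1))))"
    and "k \<le> N"
  shows "0 \<le> betau k"
  using \<open>k \<le> N\<close>
proof (induction k)
  case (Suc k)
  have "0 \<le> v (Suc k)"
    using support_value_difference_nonneg[OF assms(1-4)] v Suc.prems by simp
  then have "0 \<le> v (Suc k) / (lam k \<bullet> (p2 - p1))"
    using lam_pos[of k] Suc.prems by simp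
  then show ?case
    using Suc betau by simp
qed (rule assms(5))

locale inner_lp_run =
  fixes z :: "int \<Rightarrow> 'a::euclidean_space" and p :: 'a
    and Mi Mistar :: "nat \<Rightarrow> int set" and betal :: "nat \<Rightarrow> real" and N :: nat
  assumes p_nonzero: "p \<noteq> 0"
    and finite_Mi0: "finite (Mi 0)"
    and betal0_pos: "0 < betal 0"
    and value0_attained: "\<exists>\<nu>. lp_feasible z (Mi 0) p \<nu> \<and> (\<Sum>m\<in>Mi 0. \<nu> m) = inverse (betal 0)"
    and optimal_basis: "\<And>k. 1 \<le> k \<Longrightarrow> k \<le> N \<Longrightarrow>
      lp_optimal_basis z (Mi (k - 1) \<union> {int k}) p (Mistar k) (inverse (betal k))"
    and pruning: "\<And>k. 1 \<le> k \<Longrightarrow> k \<le> N \<Longrightarrow> Mistar k \<subseteq> Mi k \<and> Mi k \<subseteq> Mi (k - 1) \<union> {int k}"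
begin

lemma finite_Mi: "k \<le> N \<Longrightarrow> finite (Mi k)"
proof (induction k)
  case (Suc k)
  then have "Mi (Suc k) \<subseteq> insert (int (Suc k)) (Mi k)" "finite (Mi k)"
    using pruning[of "Suc k"] by auto
  then show ?case
    by (meson finite_insert finite_subset)
qed (rule finite_Mi0)

lemma value_attained:
  assumes "k \<le> N"
  shows "\<exists>\<nu>. lp_feasible z (Mi k) p \<nu> \<and> (\<Sum>m\<in>Mi k. \<nu> m) = inverse (betal k)"
proof (cases k)
  case (Suc j)
  then show ?thesis
    using lp_optimal_basis_value_attained[OF optimal_basis[of k]] assms pruning[of k] finite_Mi
    by simp
qed (use value0_attained in simp)

lemma betal_pos:
  assumes "k \<le> N"
  shows "0 < betal k"
proof (cases k)
  case (Suc j)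
  then have "0 < inverse (betal k)"
    using lp_optimal_basis_value_pos[OF optimal_basis[of k] p_nonzero] Suc assms by simp
  then show ?thesis by simp
qed (use betal0_pos in simp)

lemma normalised_dual_pos:
  assumes "1 \<le> k" "k \<le> N" "\<forall>m\<in>Mistar k. \<mu> \<bullet> z m = 1"
  shows "0 < (\<mu> /\<^sub>R infnorm \<mu>) \<bullet> p"
  using lp_optimal_basis_dual_pos[OF optimal_basis[OF assms(1,2)] p_nonzero assms(3)] .

lemma betal_step:
  assumes "k < N"
  shows "betal k \<le> betal (Suc k)"
proof -
  obtain \<nu> where \<nu>: "lp_feasible z (Mi k) p \<nu>" "(\<Sum>m\<in>Mi k. \<nu> m) = inverse (betal k)"
    using value_attained[of k] assms by auto
  have "inverse (betal (Suc k)) \<le> inverse (betal k)"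
    using lp_optimal_basis_value_le[OF optimal_basis[of "Suc k"] \<nu>(1)] \<nu>(2) finite_Mi[of k] assms
    by auto
  then show ?thesis
    using betal_pos[of k] betal_pos[of "Suc k"] assms by simp
qed

end

theorem theorem2:
  fixes C1 C2 :: "'a::euclidean_space set"
    and p1 p2 :: 'a
    and rlow \<epsilon> K :: real
    and pperp :: "int \<Rightarrow> 'a"
    and z :: "int \<Rightarrow> 'a"
    and v :: "nat \<Rightarrow> real"
    and lam :: "nat \<Rightarrow> 'a"
    and betau :: "nat \<Rightarrow> ereal"
    and betal :: "nat \<Rightarrow> real"
    and Mo :: "nat \<Rightarrow> nat set"
    and Mi Mistar :: "nat \<Rightarrow> int set"
    and N Kmax :: nat
    and tol :: real
  assumes C1: "proper_convex C1"
    and C2: "C2 \<noteq> {}" "compact C2" "convex C2"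
    and p1: "p1 \<in> interior C1"
    and p2: "p2 \<in> C2"
    and p12: "p1 \<noteq> p2"
    and rlow: "rlow = inradius C1 p1 + inradius C2 p2"
    \<comment> \<open>initialization, k = 0 (with p = p2 - p1, l = DIM('a))\<close>
    and init_eps: "\<epsilon> > 0" and init_K: "K > 0"
    and init_perp: "\<forall>m\<in>{- int DIM('a) + 1 .. -1}.
                       norm (pperp m) = 1 \<and> pperp m \<bullet> (p2 - p1) = 0"
    and init_perp_inj: "inj_on pperp {- int DIM('a) + 1 .. -1}"
    and init_perp_indep: "independent (pperp ` {- int DIM('a) + 1 .. -1})"
    and init_z: "\<forall>m\<in>{- int DIM('a) + 1 .. -1}.
                   z m = K *\<^sub>R pperp m + (\<epsilon> / norm (p2 - p1)) *\<^sub>R (p2 - p1)"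
    and init_z0: "z 0 = (real DIM('a) * \<epsilon> / norm (p2 - p1)) *\<^sub>R (p2 - p1)
                         - (\<Sum>m\<in>{- int DIM('a) + 1 .. -1}. z m)"
    and init_znorm: "\<forall>m\<in>{- int DIM('a) + 1 .. 0}. norm (z m) \<le> rlow"
    and init_Mo: "Mo 0 = {}"
    and init_bu: "betau 0 = \<infinity>"
    and init_Mi: "Mi 0 = {- int DIM('a) + 1 .. 0}"
    and init_Mistar: "Mistar 0 = Mi 0"
    and init_bl: "betal 0 = \<epsilon> / norm (p2 - p1)"
    and init_lam: "lam 0 = (p2 - p1) /\<^sub>R infnorm (p2 - p1)"
    \<comment> \<open>iterations k = 1, ..., N\<close>
    and it_z: "\<forall>k. 1 \<le> k \<and> k \<le> N \<longrightarrow>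
                 (\<exists>a b. a \<in> support_points C1 (lam (k - 1)) \<and>
                        b \<in> support_points C2 (- lam (k - 1)) \<and>
                        z (int k) = a - b + (p2 - p1))"
    and it_v: "\<forall>k. 1 \<le> k \<and> k \<le> N \<longrightarrow>
                 v k = support_value C1 (lam (k - 1)) + support_value C2 (- lam (k - 1))
                       + lam (k - 1) \<bullet> (p2 - p1)"
    and it_Mo: "\<forall>k. 1 \<le> k \<and> k \<le> N \<longrightarrow>
                 (\<exists>mstar. Mo k = {mstar} \<and> mstar \<in> Mo (k - 1) \<union> {k} \<and>
                    (\<forall>m\<in>Mo (k - 1) \<union> {k}.
                       v mstar / (lam (mstar - 1) \<bullet> (p2 - p1))
                         \<le> v m / (lam (m - 1) \<bullet> (p2 - p1))))"
    and it_bu: "\<forall>k. 1 \<le> k \<and> k \<le> N \<longrightarrow>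
                 betau k = min (betau (k - 1)) (ereal (v k / (lam (k - 1) \<bullet> (p2 - p1))))"
    and it_basis: "\<forall>k. 1 \<le> k \<and> k \<le> N \<longrightarrow>
                 lp_optimal_basis z (Mi (k - 1) \<union> {int k}) (p2 - p1) (Mistar k)
                   (inverse (betal k))"
    and it_prune: "\<forall>k. 1 \<le> k \<and> k \<le> N \<longrightarrow>
                 Mistar k \<subseteq> Mi k \<and> Mi k \<subseteq> Mi (k - 1) \<union> {int k}"
    and it_lam: "\<forall>k. 1 \<le> k \<and> k \<le> N \<longrightarrow>
                 (\<exists>\<mu>. (\<forall>m\<in>Mistar k. \<mu> \<bullet> z m = 1) \<and> lam k = \<mu> /\<^sub>R infnorm \<mu>)"
    \<comment> \<open>stopping rule: iterations 1..N are exactly those executed\<close>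
    and tol: "tol > 0"
    and stop_N: "N \<le> Kmax"
    and stop_not: "\<forall>k. 1 \<le> k \<and> k < N \<longrightarrow>
                 \<not> (betau k / ereal (betal k) - 1 < ereal tol)"
  shows "\<forall>j k. j \<le> k \<and> k \<le> N \<longrightarrow>
           betau k / ereal (betal k) - 1 \<le> betau j / ereal (betal j) - 1"
proof -
  have p_nonzero: "p2 - p1 \<noteq> 0"
    using p12 by simp
  interpret inner_lp_run z "p2 - p1" Mi Mistar betal N
  proof
    show "\<exists>\<nu>. lp_feasible z (Mi 0) (p2 - p1) \<nu> \<and> (\<Sum>m\<in>Mi 0. \<nu> m) = inverse (betal 0)"
      unfolding init_Mi init_bl
      using initial_lp_value_attained[OF init_eps p_nonzero DIM_positive init_z0] .
    show "0 < betal 0" "finite (Mi 0)"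
      using init_bl init_eps p_nonzero init_Mi by simp_all
    show "lp_optimal_basis z (Mi (k - 1) \<union> {int k}) (p2 - p1) (Mistar k) (inverse (betal k))"
      and "Mistar k \<subseteq> Mi k \<and> Mi k \<subseteq> Mi (k - 1) \<union> {int k}" if "1 \<le> k" "k \<le> N" for k
      using that it_basis it_prune by simp_all
  qed (rule p_nonzero)
  have lam_pos: "0 < lam k \<bullet> (p2 - p1)" if k: "k < N" for k
  proof (cases k)
    case 0
    then show ?thesis using init_lam p_nonzero by (simp add: infnorm_pos_lt inner_commute)
  next
    case (Suc j)
    then obtain \<mu> where "\<forall>m\<in>Mistar k. \<mu> \<bullet> z m = 1" "lam k = \<mu> /\<^sub>R infnorm \<mu>"
      using it_lam[rule_format, of k] k by auto
    then show ?thesis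
      using normalised_dual_pos[of k \<mu>] k Suc by simp
  qed
  have "bounded C1" "bounded C2" "p1 \<in> C1"
    using C1 C2 p1 interior_subset by (auto simp: proper_convex_def compact_imp_bounded)
  then have betau_nonneg: "0 \<le> betau k" if "k \<le> N" for k
    using upper_bound_nonneg[OF _ _ _ p2 _ lam_pos it_v it_bu that] init_bu by simp
  have betau_step: "betau (Suc k) \<le> betau k" if "k < N" for k
    using that it_bu by simp
  show ?thesis
    using relative_gap_antimono[of N betau betal, OF betau_nonneg betal_pos betau_step betal_step]
    by blast
qed

end
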